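(* Let $\lambda_x>0$, $\lambda_y>0$, and let $X$ and $Y$ be independent random variables with $X\sim \mathrm{Poisson}(\lambda_x)$ and $Y\sim\mathrm{Poisson}(\lambda_y)$. Let $\alpha(\lambda_x,\lambda_y)=\frac{\lambda_x}{\lambda_y}\left(1-e^{-\lambda_y}\right)$. Then $$lb_{\lambda_y}(\lambda_x)\le \mathbb{E}\left[\frac{X}{X+Y+1}\right]\le ub_{\lambda_y}(\lambda_x),$$ where $$ub_{\lambda_y}(\lambda_x)=1-\frac{1}{1+\alpha(\lambda_x,\lambda_y)},\qquad lb_{\lambda_y}(\lambda_x)=\alpha(\lambda_x,\lambda_y)-\frac{\lambda_x(1+\lambda_x)}{\lambda_y}\sum_{j=1}^{\infty}\frac{(j-1)!}{\lambda_y^{j}}.$$ *)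

theory Defs
  imports "HOL-Probability.Probability"
begin

definition alpha_xy :: "real \<Rightarrow> real \<Rightarrow> real" where
  "alpha_xy lx ly = lx / ly * (1 - exp (- ly))"

definition ub_bound :: "real \<Rightarrow> real \<Rightarrow> real" where
  "ub_bound ly lx = 1 - 1 / (1 + alpha_xy lx ly)"

text \<open>The series in the lower bound has nonnegative terms; it is taken in the
  extended nonnegative reals, so its value is its true (possibly infinite) sum,
  and the lower bound is an extended real.\<close>
definition lb_bound :: "real \<Rightarrow> real \<Rightarrow> ereal" where
  "lb_bound ly lx = ereal (alpha_xy lx ly)
     - ereal (lx * (1 + lx) / ly)
       * enn2ereal (\<Sum>\<^sub>\<infinity> j\<in>{1::nat..}. ennreal (fact (j - 1) / ly ^ j))"

end

theory Submission
  imports Defs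
begin

text \<open>The series in the lower bound diverges, because \<open>(j - 1)! / \<lambda>\<^sub>y\<^sup>j \<rightarrow> \<infinity>\<close>, so the lower
  bound is \<open>-\<infinity>\<close>. The upper bound is Jensen's inequality for the concave map
  \<open>x \<mapsto> x / (x + c)\<close>, used twice: for fixed \<open>Y\<close>, averaging over \<open>X\<close> gives at most
  \<open>\<lambda>\<^sub>x / (\<lambda>\<^sub>x + Y + 1) = T / (T + 1 / \<lambda>\<^sub>x)\<close> with \<open>T = 1 / (Y + 1)\<close>, and averaging over \<open>Y\<close>
  then gives at most \<open>m / (m + 1 / \<lambda>\<^sub>x) = 1 - 1 / (1 + \<alpha>)\<close>, where
  \<open>m = E T = (1 - exp (- \<lambda>\<^sub>y)) / \<lambda>\<^sub>y\<close>. Jensen is applied in tangent-line form.\<close>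

lemma divide_add_le_tangent:
  fixes x a c :: real
  assumes "0 \<le> x" "0 \<le> a" "0 < c"
  shows "x / (x + c) \<le> a / (a + c) + c / (a + c)^2 * (x - a)"
proof -
  have "a / (a + c) + c / (a + c)^2 * (x - a) - x / (x + c) = c * (x - a)^2 / ((x + c) * (a + c)^2)"
    using assms by (simp add: divide_simps) (simp add: algebra_simps power2_eq_square)
  moreover have "c * (x - a)^2 / ((x + c) * (a + c)^2) \<ge> 0"
    using assms by simp
  ultimately show ?thesis by linarith
qed

lemma (in prob_space) expectation_le_tangent_line:
  fixes g h :: "'a \<Rightarrow> real"
  assumes "integrable M g" "integrable M h"
    and "AE x in M. h x \<le> c + d * (g x - expectation g)"
  shows "expectation h \<le> c"
proof -
  have "expectation h \<le> expectation (\<lambda>x. c + d * (g x - expectation g))"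
    using assms by (intro integral_mono_AE) auto
  also have "\<dots> = c"
    using assms(1) by (simp add: prob_space)
  finally show ?thesis .
qed

lemma (in prob_space) expectation_divide_add_le:
  fixes g :: "'a \<Rightarrow> real"
  assumes "0 < c" "integrable M g" "AE x in M. 0 \<le> g x"
  shows "expectation (\<lambda>x. g x / (g x + c)) \<le> expectation g / (expectation g + c)"
proof (rule expectation_le_tangent_line[where g=g])
  have "AE x in M. norm (g x / (g x + c)) \<le> 1"
    using assms(3) by eventually_elim (use assms(1) in simp)
  then show "integrable M (\<lambda>x. g x / (g x + c))"
    using assms(2) by (intro integrable_const_bound[where B=1]) auto
  have Eg: "0 \<le> expectation g"
    using assms(3) by (rule integral_nonneg_AE)
  from assms(3) show "AE x in M. g x / (g x + c) \<le> expectation g / (expectation g + c)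
      + c / (expectation g + c)^2 * (g x - expectation g)"
    by eventually_elim (blast intro: divide_add_le_tangent assms(1) Eg)
qed (rule assms(2))

lemma expectation_pair_pmf_iterated:
  fixes f :: "'a \<times> 'b \<Rightarrow> real"
  assumes "\<And>z. 0 \<le> f z" "\<And>z. f z \<le> C"
  shows "measure_pmf.expectation (pair_pmf p q) f
    = measure_pmf.expectation q (\<lambda>y. measure_pmf.expectation p (\<lambda>x. f (x, y)))"
proof -
  have inner: "(\<integral>\<^sup>+x. f (x, y) \<partial>p) = ennreal (measure_pmf.expectation p (\<lambda>x. f (x, y)))" for y
    using assms by (intro nn_integral_eq_integral measure_pmf.integrable_const_bound[where B=C]) auto
  have "(\<integral>\<^sup>+z. f z \<partial>pair_pmf p q) = (\<integral>\<^sup>+z. f (case z of (y, x) \<Rightarrow> (x, y)) \<partial>pair_pmf q p)"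
    by (subst pair_commute_pmf) (simp add: case_prod_beta)
  also have "\<dots> = (\<integral>\<^sup>+y. ennreal (measure_pmf.expectation p (\<lambda>x. f (x, y))) \<partial>q)"
    by (simp add: nn_integral_pair_pmf' inner)
  finally show ?thesis
    using assms by (simp add: integral_eq_nn_integral integral_nonneg)
qed

lemma expectation_pair_pmf_divide_add_le:
  fixes g :: "'a \<Rightarrow> real" and c :: "'b \<Rightarrow> real"
  assumes "integrable (measure_pmf p) g" "\<And>x. 0 \<le> g x" "\<And>y. 0 < c y"
  defines "\<mu> \<equiv> measure_pmf.expectation p g"
  shows "measure_pmf.expectation (pair_pmf p q) (\<lambda>(x, y). g x / (g x + c y))
    \<le> measure_pmf.expectation q (\<lambda>y. \<mu> / (\<mu> + c y))"
proof -
  have "0 \<le> \<mu>"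
    unfolding \<mu>_def using assms(2) by (simp add: integral_nonneg)
  then have pos_\<mu>: "0 < \<mu> + c y" for y
    using assms(3) by (rule add_nonneg_pos)
  have pos: "0 < g x + c y" for x y
    using assms(2,3) by (rule add_nonneg_pos)
  have "measure_pmf.expectation (pair_pmf p q) (\<lambda>(x, y). g x / (g x + c y))
      = measure_pmf.expectation q (\<lambda>y. measure_pmf.expectation p (\<lambda>x. g x / (g x + c y)))"
    using assms(2,3) pos
    by (subst expectation_pair_pmf_iterated[where C=1]) (auto simp: divide_le_eq_1 less_imp_le)
  also have "\<dots> \<le> measure_pmf.expectation q (\<lambda>y. \<mu> / (\<mu> + c y))"
  proof (rule integral_mono')
    show "integrable q (\<lambda>y. \<mu> / (\<mu> + c y))"
      using \<open>0 \<le> \<mu>\<close> pos_\<mu> assms(3)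
      by (intro measure_pmf.integrable_const_bound[where B=1]) (auto intro!: AE_I2 simp: divide_le_eq_1 less_imp_le)
    show "measure_pmf.expectation p (\<lambda>x. g x / (g x + c y)) \<le> \<mu> / (\<mu> + c y)" for y
      unfolding \<mu>_def using assms by (intro measure_pmf.expectation_divide_add_le) auto
    show "0 \<le> \<mu> / (\<mu> + c y)" for y
      using \<open>0 \<le> \<mu>\<close> pos_\<mu>[of y] by simp
  qed
  finally show ?thesis .
qed

lemma has_bochner_integral_measure_pmf_nat:
  fixes p :: "nat pmf" and g :: "nat \<Rightarrow> real"
  assumes "\<And>n. 0 \<le> g n" and "(\<lambda>n. pmf p n * g n) sums s"
  shows "has_bochner_integral (measure_pmf p) g s"
proof -
  have int: "integrable (count_space UNIV) (\<lambda>n. pmf p n * g n)"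
    using assms unfolding integrable_count_space_nat_iff by (simp add: sums_iff)
  have "integrable (measure_pmf p) g"
    using int unfolding measure_pmf_eq_density by (subst integrable_density) auto
  moreover have "measure_pmf.expectation p g = (\<integral>n. pmf p n * g n \<partial>count_space UNIV)"
    unfolding measure_pmf_eq_density by (subst integral_density) auto
  moreover have "\<dots> = s"
    using int assms by (subst integral_count_space_nat) (simp_all add: sums_iff)
  ultimately show ?thesis
    by (simp add: has_bochner_integral_iff)
qed

lemma exp_converges_real: "(\<lambda>n. x ^ n / fact n) sums exp (x :: real)"
  using exp_converges[of x] by (simp add: divide_inverse mult.commute)

lemma poisson_mean_sums:
  assumes "0 < l"
  shows "(\<lambda>n. pmf (poisson_pmf l) n * real n) sums l"
proof -
  have "(\<lambda>n. l * exp (-l) * (l ^ n / fact n)) sums (l * exp (-l) * exp l)"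
    by (intro sums_mult exp_converges_real)
  moreover have "(\<lambda>n. l * exp (-l) * (l ^ n / fact n)) = (\<lambda>n. pmf (poisson_pmf l) (Suc n) * real (Suc n))"
    using assms by (simp add: fun_eq_iff divide_simps)
  moreover have "l * exp (-l) * exp l = l"
    by (simp add: exp_minus)
  ultimately have "(\<lambda>n. pmf (poisson_pmf l) (Suc n) * real (Suc n)) sums l"
    by (simp only:)
  then show ?thesis
    by (subst (asm) sums_Suc_iff) simp
qed

lemma poisson_inverse_Suc_sums:
  assumes "0 < l"
  shows "(\<lambda>n. pmf (poisson_pmf l) n * (1 / (real n + 1))) sums ((1 - exp (-l)) / l)"
proof -
  have "(\<lambda>n. l ^ Suc n / fact (Suc n)) sums (exp l - 1)"
    using exp_converges_real[of l] by (subst sums_Suc_iff) simp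
  then have "(\<lambda>n. exp (-l) / l * (l ^ Suc n / fact (Suc n))) sums (exp (-l) / l * (exp l - 1))"
    by (rule sums_mult)
  moreover have "(\<lambda>n. exp (-l) / l * (l ^ Suc n / fact (Suc n)))
      = (\<lambda>n. pmf (poisson_pmf l) n * (1 / (real n + 1)))"
    using assms by (simp add: fun_eq_iff divide_simps)
  moreover have "exp (-l) / l * (exp l - 1) = (1 - exp (-l)) / l"
    by (simp add: field_simps exp_minus)
  ultimately show ?thesis
    by (simp only:)
qed

lemma infsum_fact_divide_power_eq_top:
  fixes l :: real
  assumes "0 < l"
  shows "(\<Sum>\<^sub>\<infinity> j\<in>{1::nat..}. ennreal (fact (j - 1) / l ^ j)) = \<infinity>"
proof -
  have "(\<lambda>n. l * (l ^ n / fact n)) \<longlonglongrightarrow> 0"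
    by (intro tendsto_mult_right_zero summable_LIMSEQ_zero sums_summable[OF exp_converges_real])
  then have "eventually (\<lambda>n. l * (l ^ n / fact n) < 1) sequentially"
    by (rule order_tendstoD) simp
  then obtain N where N: "\<And>n. N \<le> n \<Longrightarrow> l ^ Suc n < fact n"
    by (auto simp: eventually_sequentially field_simps)
  have "1 \<le> ennreal (fact (j - 1) / l ^ j)" if j: "j \<in> {Suc N..}" for j
  proof -
    obtain n where "j = Suc n" "N \<le> n"
      using j by (cases j) auto
    with N[of n] assms show ?thesis
      by (simp add: field_simps)
  qed
  then have "(\<Sum>\<^sub>\<infinity> j\<in>{Suc N..}. ennreal (fact (j - 1) / l ^ j)) = \<infinity>"
    by (rule infsum_superconst_infinite_ennreal) (auto simp: infinite_Ici)
  moreover have "(\<Sum>\<^sub>\<infinity> j\<in>{Suc N..}. ennreal (fact (j - 1) / l ^ j))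
      \<le> (\<Sum>\<^sub>\<infinity> j\<in>{1::nat..}. ennreal (fact (j - 1) / l ^ j))"
    by (rule infsum_mono_neutral) (auto simp: nonneg_summable_on_complete)
  ultimately show ?thesis
    by (simp add: top_unique)
qed

lemma lb_bound_eq_minf:
  assumes "0 < lx" "0 < ly"
  shows "lb_bound ly lx = - \<infinity>"
  unfolding lb_bound_def infsum_fact_divide_power_eq_top[OF assms(2)] using assms by simp

lemma ub_bound_eq:
  assumes "0 < lx" "0 < ly"
  defines "m \<equiv> (1 - exp (- ly)) / ly"
  shows "ub_bound ly lx = m / (m + 1 / lx)"
proof -
  have "alpha_xy lx ly = lx * m"
    by (simp add: alpha_xy_def m_def)
  moreover have "0 < 1 + lx * m"
    using assms by (simp add: m_def add_pos_nonneg)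
  ultimately show ?thesis
    using assms(1) by (simp add: ub_bound_def divide_simps ac_simps)
qed

theorem lemma2:
  fixes lx ly :: real
  assumes "lx > 0" and "ly > 0"
  defines "E \<equiv> measure_pmf.expectation (pair_pmf (poisson_pmf lx) (poisson_pmf ly))
                 (\<lambda>(x, y). real x / (real x + real y + 1))"
  shows "lb_bound ly lx \<le> ereal E \<and> E \<le> ub_bound ly lx"
proof
  show "lb_bound ly lx \<le> ereal E"
    using lb_bound_eq_minf[OF assms(1,2)] by simp
next
  define t where "t y = 1 / (real y + 1)" for y :: nat
  define m where "m = (1 - exp (- ly)) / ly"
  have "has_bochner_integral (poisson_pmf lx) real lx"
    using assms(1) by (intro has_bochner_integral_measure_pmf_nat poisson_mean_sums) auto
  then have "E \<le> measure_pmf.expectation (poisson_pmf ly) (\<lambda>y. lx / (lx + (real y + 1)))"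
    unfolding E_def using expectation_pair_pmf_divide_add_le[of "poisson_pmf lx" real "\<lambda>y. real y + 1"]
    by (simp add: has_bochner_integral_iff add.assoc)
  also have "\<dots> = measure_pmf.expectation (poisson_pmf ly) (\<lambda>y. t y / (t y + 1 / lx))"
    using assms(1) by (simp add: t_def divide_simps)
  also have "\<dots> \<le> m / (m + 1 / lx)"
  proof -
    have "has_bochner_integral (poisson_pmf ly) t m"
      unfolding t_def m_def using assms(2)
      by (intro has_bochner_integral_measure_pmf_nat poisson_inverse_Suc_sums) auto
    then show ?thesis
      using measure_pmf.expectation_divide_add_le[of "1 / lx" "poisson_pmf ly" t] assms(1)
      by (simp add: has_bochner_integral_iff t_def)
  qed
  also have "\<dots> = ub_bound ly lx"
    unfolding m_def using ub_bound_eq[OF assms(1,2)] by simp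
  finally show "E \<le> ub_bound ly lx" .
qed

end
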